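(* The following hold. (1) If $\mathbf v_0,\mathbf v_1\in\Lambda_q$ and $\mathbf v_0\neq\pm\mathbf v_1$, then $|\mathbf v_0\wedge\mathbf v_1|\ge1$. (2) Let $\mathbf v\in\mathbb R^2\setminus\{0\}$ be not parallel to any vector of $\Lambda_q$, and let $\mathbf u_0,\mathbf u_1\in\Lambda_q$ with $\mathbf u_0\wedge\mathbf u_1=1$ and $\mathbf v\in\{\alpha\mathbf u_0+\beta\mathbf u_1:\alpha,\beta>0\}$. Then there exist grandchildren $\mathbf w_0,\mathbf w_1$ of $\mathbf u_0,\mathbf u_1$ with $\mathbf w_0\wedge\mathbf w_1=1$, $\{\mathbf w_0,\mathbf w_1\}\neq\{\mathbf u_0,\mathbf u_1\}$, and $\mathbf v\in\{\alpha\mathbf w_0+\beta\mathbf w_1:\alpha,\beta>0\}$. (3) Let $\mathbf u_0,\mathbf u_1\in\Lambda_q$ with $\mathbf u_0\wedge\mathbf u_1=1$, and let $(\mathbf w_n)_{n\ge1}$ be any sequence such that for each $n$, $\mathbf w_n$ is generated at stage $n$ of the $G_q$-Stern–Brocot process started from $(\mathbf u_0,\mathbf u_1)$. Then $\|\mathbf w_n\|\to\infty$. (4) The set of slopes $y/x$ of vectors $(x,y)^T\in\Lambda_q$ with $x\neq0$ is dense in $\mathbb R$.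
   Context: Fix an integer $q\ge3$, let $\lambda_q=2\cos(\pi/q)$, and let $G_q\subset \mathrm{SL}(2,\mathbb R)$ be the Hecke triangle group generated by $S=\begin{pmatrix}0&-1\\1&0\end{pmatrix}$ and $T_q=\begin{pmatrix}1&\lambda_q\\0&1\end{pmatrix}$, acting linearly on $\mathbb R^2$. Set $\Lambda_q=G_q(1,0)^T$. Let $U_q=T_qS$ and $(x_j^q,y_j^q)^T=U_q^j(1,0)^T$. Wedge product: $(x_0,y_0)^T\wedge(x_1,y_1)^T=x_0y_1-x_1y_0$. The $G_q$-Stern–Brocot process started from a pair $\mathbf u_0,\mathbf u_1\in\Lambda_q$ with $\mathbf u_0\wedge\mathbf u_1=1$: set $L_0=(\mathbf u_0,\mathbf u_1)$ and obtain $L_{n+1}$ from the list $L_n$ by replacing each consecutive pair $(\mathbf v,\mathbf w)$ with $x_j^q\mathbf v+y_j^q\mathbf w$, $j=0,\dots,q-1$. A vector is generated at stage $n\ge1$ if it appears in $L_n$ but not in $L_{n-1}$; grandchildren of $\mathbf u_0,\mathbf u_1$ are the vectors generated at some stage $n\ge1$. *)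

theory Defs
  imports "HOL-Analysis.Analysis"
begin

definition lam :: "nat \<Rightarrow> real" where
  "lam q = 2 * cos (pi / real q)"

definition Smat :: "real^2^2" where
  "Smat = vector [vector [0, -1], vector [1, 0]]"

definition Tmat :: "nat \<Rightarrow> real^2^2" where
  "Tmat q = vector [vector [1, lam q], vector [0, 1]]"

definition Sinv :: "real^2^2" where
  "Sinv = vector [vector [0, 1], vector [-1, 0]]"

definition Tinv :: "nat \<Rightarrow> real^2^2" where
  "Tinv q = vector [vector [1, - lam q], vector [0, 1]]"

inductive_set hecke_group :: "nat \<Rightarrow> (real^2^2) set" for q where
  id: "mat 1 \<in> hecke_group q"
| S: "A \<in> hecke_group q \<Longrightarrow> Smat ** A \<in> hecke_group q"
| T: "A \<in> hecke_group q \<Longrightarrow> Tmat q ** A \<in> hecke_group q"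
| Si: "A \<in> hecke_group q \<Longrightarrow> Sinv ** A \<in> hecke_group q"
| Ti: "A \<in> hecke_group q \<Longrightarrow> Tinv q ** A \<in> hecke_group q"

definition e1 :: "real^2" where
  "e1 = vector [1, 0]"

definition Lambda :: "nat \<Rightarrow> (real^2) set" where
  "Lambda q = {A *v e1 | A. A \<in> hecke_group q}"

definition wedge :: "real^2 \<Rightarrow> real^2 \<Rightarrow> real" where
  "wedge v w = v$1 * w$2 - w$1 * v$2"

definition Umat :: "nat \<Rightarrow> real^2^2" where
  "Umat q = Tmat q ** Smat"

fun Upow :: "nat \<Rightarrow> nat \<Rightarrow> real^2^2" where
  "Upow q 0 = mat 1"
| "Upow q (Suc j) = Umat q ** Upow q j"

definition xq :: "nat \<Rightarrow> nat \<Rightarrow> real" where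
  "xq q j = (Upow q j *v e1) $ 1"

definition yq :: "nat \<Rightarrow> nat \<Rightarrow> real" where
  "yq q j = (Upow q j *v e1) $ 2"

text \<open>One refinement step: each consecutive pair (v,w) is replaced by
  x_j v + y_j w, j = 0..q-1.  Since (x_0,y_0) = (1,0) and (x_{q-1},y_{q-1}) = (0,1),
  the blocks of consecutive pairs share their endpoints; the shared endpoint
  is kept once (the j = q-1 term of one block is the j = 0 term of the next).\<close>
fun sb_step :: "nat \<Rightarrow> (real^2) list \<Rightarrow> (real^2) list" where
  "sb_step q [] = []"
| "sb_step q [v] = [v]"
| "sb_step q (v # w # rest) =
     map (\<lambda>j. xq q j *\<^sub>R v + yq q j *\<^sub>R w) [0..<q - 1] @ sb_step q (w # rest)"

fun sb_list :: "nat \<Rightarrow> real^2 \<Rightarrow> real^2 \<Rightarrow> nat \<Rightarrow> (real^2) list" where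
  "sb_list q u0 u1 0 = [u0, u1]"
| "sb_list q u0 u1 (Suc n) = sb_step q (sb_list q u0 u1 n)"

definition generated_at :: "nat \<Rightarrow> real^2 \<Rightarrow> real^2 \<Rightarrow> nat \<Rightarrow> real^2 \<Rightarrow> bool" where
  "generated_at q u0 u1 n v \<longleftrightarrow>
     1 \<le> n \<and> v \<in> set (sb_list q u0 u1 n) \<and> v \<notin> set (sb_list q u0 u1 (n - 1))"

definition grandchild :: "nat \<Rightarrow> real^2 \<Rightarrow> real^2 \<Rightarrow> real^2 \<Rightarrow> bool" where
  "grandchild q u0 u1 v \<longleftrightarrow> (\<exists>n\<ge>1. generated_at q u0 u1 n v)"

definition open_cone :: "real^2 \<Rightarrow> real^2 \<Rightarrow> (real^2) set" where
  "open_cone u0 u1 = {\<alpha> *\<^sub>R u0 + \<beta> *\<^sub>R u1 | \<alpha> \<beta>. \<alpha> > 0 \<and> \<beta> > 0}"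

end

theory Submission
  imports Defs
begin

text \<open>The process started from \<open>(e1, e2)\<close> is self-similar: stage \<open>n + 1\<close> is the union of the images
  of stage \<open>n\<close> under the \<open>q - 1\<close> linear maps with columns \<open>U_q^j e1, U_q^(j+1) e1\<close>, whose entries
  are the numbers \<open>sin (k\<pi>/q) / sin (\<pi>/q)\<close>. By induction its vectors are \<open>e1\<close>, \<open>e2\<close> or have both
  coordinates \<open>\<ge> 1\<close>, any two of them have wedge of absolute value \<open>\<ge> 1\<close>, and a vector new at stage \<open>n\<close>
  has coordinate sum \<open>\<ge> n + 1\<close>. Together with their rotations by \<open>S\<close> and \<open>-1\<close> these vectors form a
  set invariant under \<open>S\<close>, \<open>U_q\<close> and \<open>U_q\<close>\<open>\<inverse>\<close>, hence containing \<open>\<Lambda>_q\<close>: this is (1).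
  By (1), every unimodular pair in \<open>\<Lambda>_q\<close> is the image of \<open>(e1, e2)\<close> under some element of \<open>G_q\<close>, so every
  process is a linear image of the standard one, and (3) follows from the growth of coordinate sums.
  A vector not parallel to \<open>\<Lambda>_q\<close> lies in a nested sequence of cones spanned by consecutive vertices;
  the coefficients of the vector in these frames shrink, which gives (2) and, comparing slopes, (4).\<close>

lemma vec2_eq_iff: "(u::real^2) = v \<longleftrightarrow> u$1 = v$1 \<and> u$2 = v$2"
  by (simp add: vec_eq_iff forall_2)

lemma mat2_eq_iff:
  "(A::real^2^2) = B \<longleftrightarrow> A$1$1 = B$1$1 \<and> A$1$2 = B$1$2 \<and> A$2$1 = B$2$1 \<and> A$2$2 = B$2$2"
  by (simp add: vec_eq_iff forall_2)

lemma matrix_vector_mult_2: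
  "(A::real^2^2) *v x = vector [A$1$1*x$1 + A$1$2*x$2, A$2$1*x$1 + A$2$2*x$2]"
  by (simp add: vec_eq_iff forall_2 matrix_vector_mult_def sum_2)

lemma matrix_matrix_mult_2_nth: "((A::real^2^2) ** B) $ i $ j = A$i$1 * B$1$j + A$i$2 * B$2$j"
  by (simp add: matrix_matrix_mult_def sum_2)

lemma mat_1_2_nth:
  "(mat 1 :: real^2^2) $1$1 = 1" "(mat 1 :: real^2^2) $1$2 = 0"
  "(mat 1 :: real^2^2) $2$1 = 0" "(mat 1 :: real^2^2) $2$2 = 1"
  by (simp_all add: mat_def)

lemma wedge_antisym: "wedge a b = - wedge b a"
  by (simp add: wedge_def)

lemma wedge_matrix_vector_mult: "wedge ((A::real^2^2) *v a) (A *v b) = det A * wedge a b"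
  by (simp add: matrix_vector_mult_2 det_2 wedge_def algebra_simps)

lemma wedge_eq_0_imp_parallel:
  assumes "p \<noteq> 0" "wedge p w = 0"
  shows "\<exists>c. w = c *\<^sub>R (p::real^2)"
proof (cases "p$1 = 0")
  case True
  then have "p$2 \<noteq> 0" using assms(1) by (auto simp: vec2_eq_iff)
  then show ?thesis using True assms(2)
    by (intro exI[of _ "w$2 / p$2"]) (auto simp: vec2_eq_iff wedge_def)
next
  case False
  have "w$2 = w$1 / p$1 * p$2" using False assms(2) by (simp add: wedge_def field_simps)
  then show ?thesis using False by (intro exI[of _ "w$1 / p$1"]) (auto simp: vec2_eq_iff)
qed

lemma unimodular_decomp:
  assumes "wedge p r = 1"
  shows "w = wedge w r *\<^sub>R p + wedge p w *\<^sub>R (r::real^2)"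
proof -
  have "(w$1*r$2 - r$1*w$2)*p$k + (p$1*w$2 - w$1*p$2)*r$k = w$k*(p$1*r$2 - r$1*p$2)"
    if "k = 1 \<or> k = 2" for k
    using that by (auto simp: algebra_simps)
  then show ?thesis using assms by (simp add: vec2_eq_iff wedge_def)
qed

lemma abs_wedge_le: "\<bar>wedge a b\<bar> \<le> 2 * norm a * norm b"
proof -
  have "\<bar>a$i\<bar> \<le> norm a" "\<bar>b$i\<bar> \<le> norm b" for i
    by (simp_all add: component_le_norm_cart)
  then have "\<bar>a$1\<bar> * \<bar>b$2\<bar> \<le> norm a * norm b" "\<bar>b$1\<bar> * \<bar>a$2\<bar> \<le> norm b * norm a"
    by (simp_all add: mult_mono)
  moreover have "\<bar>wedge a b\<bar> \<le> \<bar>a$1\<bar> * \<bar>b$2\<bar> + \<bar>b$1\<bar> * \<bar>a$2\<bar>"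
    unfolding wedge_def by (metis abs_mult abs_triangle_ineq4)
  ultimately show ?thesis by (simp add: algebra_simps)
qed

definition e2 :: "real^2" where
  "e2 = vector [0, 1]"

lemma e1_nth [simp]: "e1$1 = 1" "e1$2 = 0"
  and e2_nth [simp]: "e2$1 = 0" "e2$2 = 1"
  by (simp_all add: e1_def e2_def)

definition frame_map :: "real^2 \<Rightarrow> real^2 \<Rightarrow> real^2 \<Rightarrow> real^2" where
  "frame_map p r z = z$1 *\<^sub>R p + z$2 *\<^sub>R r"

lemma frame_map_nth [simp]:
  "frame_map p r z $1 = z$1 * p$1 + z$2 * r$1"
  "frame_map p r z $2 = z$1 * p$2 + z$2 * r$2"
  by (simp_all add: frame_map_def)

lemma frame_map_e1 [simp]: "frame_map p r e1 = p"
  and frame_map_e2 [simp]: "frame_map p r e2 = r"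
  and frame_map_basis: "frame_map e1 e2 z = z"
  by (simp_all add: vec2_eq_iff)

lemma frame_map_linear:
  "frame_map p r (a *\<^sub>R x + b *\<^sub>R y) = a *\<^sub>R frame_map p r x + b *\<^sub>R frame_map p r y"
  by (simp add: vec2_eq_iff algebra_simps)

lemma frame_map_scaleR: "frame_map p r (c *\<^sub>R z) = c *\<^sub>R frame_map p r z"
  by (simp add: vec2_eq_iff algebra_simps)

lemma frame_map_frame_map:
  "frame_map p r (frame_map p' r' z) = frame_map (frame_map p r p') (frame_map p r r') z"
  by (simp add: vec2_eq_iff algebra_simps)

lemma matrix_vector_mult_frame_map:
  "(A::real^2^2) *v frame_map p r z = frame_map (A *v p) (A *v r) z"
  by (simp add: matrix_vector_mult_2 vec2_eq_iff algebra_simps)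

lemma wedge_frame_map: "wedge (frame_map p r a) (frame_map p r b) = wedge p r * wedge a b"
  by (simp add: wedge_def algebra_simps)

lemma wedge_frame_map_expand: "wedge (frame_map p r a) (frame_map p' r' b) =
   a$1*b$1*wedge p p' + a$1*b$2*wedge p r' + a$2*b$1*wedge r p' + a$2*b$2*wedge r r'"
  by (simp add: wedge_def algebra_simps)

lemma wedge_frame_map_left: "wedge (frame_map p r z) r = z$1 * wedge p r"
  and wedge_frame_map_right: "wedge p (frame_map p r z) = z$2 * wedge p r"
  by (simp_all add: wedge_def algebra_simps)

lemma frame_map_inj: "wedge p r = 1 \<Longrightarrow> frame_map p r x = frame_map p r y \<Longrightarrow> x = y"
  by (metis wedge_frame_map_left wedge_frame_map_right mult.right_neutral vec2_eq_iff)

lemma open_cone_iff: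
  "v \<in> open_cone p r \<longleftrightarrow> (\<exists>a b. 0 < a \<and> 0 < b \<and> v = a *\<^sub>R p + b *\<^sub>R r)"
  unfolding open_cone_def by blast

lemma generator_nth:
  "Smat$1$1 = 0" "Smat$1$2 = -1" "Smat$2$1 = 1" "Smat$2$2 = 0"
  "Sinv$1$1 = 0" "Sinv$1$2 = 1" "Sinv$2$1 = -1" "Sinv$2$2 = 0"
  "Tmat q$1$1 = 1" "Tmat q$1$2 = lam q" "Tmat q$2$1 = 0" "Tmat q$2$2 = 1"
  "Tinv q$1$1 = 1" "Tinv q$1$2 = - lam q" "Tinv q$2$1 = 0" "Tinv q$2$2 = 1"
  by (simp_all add: Smat_def Sinv_def Tmat_def Tinv_def)

lemma Smat_mult_nth [simp]: "(Smat *v z) $1 = - z$2" "(Smat *v z) $2 = z$1"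
  and Sinv_mult_nth [simp]: "(Sinv *v z) $1 = z$2" "(Sinv *v z) $2 = - z$1"
  and Tmat_mult_nth [simp]: "(Tmat q *v z) $1 = z$1 + lam q * z$2" "(Tmat q *v z) $2 = z$2"
  and Tinv_mult_nth [simp]: "(Tinv q *v z) $1 = z$1 - lam q * z$2" "(Tinv q *v z) $2 = z$2"
  by (simp_all add: matrix_vector_mult_2 generator_nth)

lemma Umat_mult_nth [simp]: "(Umat q *v z) $1 = lam q * z$1 - z$2" "(Umat q *v z) $2 = z$1"
  by (simp_all add: Umat_def matrix_vector_mul_assoc[symmetric])

lemma hecke_group_mult: "A \<in> hecke_group q \<Longrightarrow> B \<in> hecke_group q \<Longrightarrow> A ** B \<in> hecke_group q"
  by (induction A rule: hecke_group.induct)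
    (auto simp: matrix_mul_assoc[symmetric] intro: hecke_group.intros)

lemma generators_in_hecke_group:
  "Smat \<in> hecke_group q" "Tmat q \<in> hecke_group q" "Sinv \<in> hecke_group q" "Tinv q \<in> hecke_group q"
  using hecke_group.intros(2-5)[OF hecke_group.id[of q]] by simp_all

lemma Upow_in_hecke_group: "Upow q j \<in> hecke_group q"
  by (induction j)
    (auto simp: Umat_def intro: hecke_group.id hecke_group_mult generators_in_hecke_group)

lemma generator_inverses:
  "Sinv ** Smat = mat 1" "Smat ** Sinv = mat 1" "Tinv q ** Tmat q = mat 1" "Tmat q ** Tinv q = mat 1"
  by (simp_all add: mat2_eq_iff matrix_matrix_mult_2_nth generator_nth mat_1_2_nth)

lemma left_inverse_mult:
  "G' ** G = mat 1 \<Longrightarrow> A' ** A = mat 1 \<Longrightarrow> (A' ** G') ** (G ** A) = (mat 1 :: 'a::semiring_1^'n^'n)"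
  by (metis matrix_mul_assoc matrix_mul_lid)

lemma hecke_group_left_inverse: "A \<in> hecke_group q \<Longrightarrow> \<exists>A'\<in>hecke_group q. A' ** A = mat 1"
proof (induction A rule: hecke_group.induct)
  case id
  then show ?case by (auto intro: hecke_group.id)
next
  case (S A)
  then show ?case
    using left_inverse_mult[OF generator_inverses(1)] hecke_group_mult generators_in_hecke_group(3) by blast
next
  case (T A)
  then show ?case
    using left_inverse_mult[OF generator_inverses(3)] hecke_group_mult generators_in_hecke_group(4) by blast
next
  case (Si A)
  then show ?case
    using left_inverse_mult[OF generator_inverses(2)] hecke_group_mult generators_in_hecke_group(1) by blast
next
  case (Ti A)
  then show ?case
    using left_inverse_mult[OF generator_inverses(4)] hecke_group_mult generators_in_hecke_group(2) by blast
qed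

lemma det_generators: "det Smat = 1" "det (Tmat q) = 1" "det Sinv = 1" "det (Tinv q) = 1"
  by (simp_all add: det_2 generator_nth)

lemma det_hecke_group: "A \<in> hecke_group q \<Longrightarrow> det A = 1"
  by (induction A rule: hecke_group.induct) (simp_all add: det_mul det_generators)

lemma Lambda_closed: "g \<in> hecke_group q \<Longrightarrow> x \<in> Lambda q \<Longrightarrow> g *v x \<in> Lambda q"
  unfolding Lambda_def by (auto simp: matrix_vector_mul_assoc intro: hecke_group_mult)

lemma e1_in_Lambda: "e1 \<in> Lambda q"
  unfolding Lambda_def using hecke_group.id by force

lemma e2_in_Lambda: "e2 \<in> Lambda q" and minus_e2_in_Lambda: "- e2 \<in> Lambda q"
proof -
  have "Smat *v e1 = e2" "Sinv *v e1 = - e2" by (simp_all add: vec2_eq_iff)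
  then show "e2 \<in> Lambda q" "- e2 \<in> Lambda q"
    using Lambda_closed[OF _ e1_in_Lambda] generators_in_hecke_group by metis+
qed

definition Tpow :: "nat \<Rightarrow> int \<Rightarrow> real^2^2" where
  "Tpow q k = vector [vector [1, of_int k * lam q], vector [0, 1]]"

lemma Tpow_nth:
  "Tpow q k $1$1 = 1" "Tpow q k $1$2 = of_int k * lam q" "Tpow q k $2$1 = 0" "Tpow q k $2$2 = 1"
  by (simp_all add: Tpow_def)

lemma Tpow_in_hecke_group: "Tpow q k \<in> hecke_group q"
proof -
  have "Tpow q (int n) \<in> hecke_group q \<and> Tpow q (- int n) \<in> hecke_group q" for n
  proof (induction n)
    case 0
    have "Tpow q 0 = mat 1" by (simp add: mat2_eq_iff Tpow_nth mat_1_2_nth)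
    then show ?case using hecke_group.id by simp
  next
    case (Suc n)
    have "Tpow q (int (Suc n)) = Tmat q ** Tpow q (int n)"
      "Tpow q (- int (Suc n)) = Tinv q ** Tpow q (- int n)"
      by (simp_all add: mat2_eq_iff Tpow_nth matrix_matrix_mult_2_nth generator_nth algebra_simps)
    then show ?case using Suc hecke_group.T hecke_group.Ti by metis
  qed
  then show ?thesis by (cases k rule: int_cases2) auto
qed

section \<open>The orbit of \<open>e1\<close> under \<open>U_q\<close>\<close>

definition sin_ratio :: "nat \<Rightarrow> nat \<Rightarrow> real" where
  "sin_ratio q k = sin (real k * (pi / real q)) / sin (pi / real q)"

definition Uorbit :: "nat \<Rightarrow> nat \<Rightarrow> real^2" where
  "Uorbit q j = Upow q j *v e1"

lemma Uorbit_0: "Uorbit q 0 = e1"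
  by (simp add: Uorbit_def)

lemma Uorbit_Suc: "Uorbit q (Suc j) = Umat q *v Uorbit q j"
  by (simp add: Uorbit_def matrix_vector_mul_assoc)

lemma Uorbit_1: "Uorbit q (Suc 0) = vector [lam q, 1]"
  by (simp add: Uorbit_Suc[of q 0] Uorbit_0 vec2_eq_iff)

lemma xq_yq_Uorbit: "xq q j = Uorbit q j $ 1" "yq q j = Uorbit q j $ 2"
  by (simp_all add: xq_def yq_def Uorbit_def)

lemma wedge_Umat: "wedge (Umat q *v a) (Umat q *v b) = wedge a b"
  by (simp add: wedge_def algebra_simps)

lemma wedge_Uorbit_shift: "wedge (Uorbit q i) (Uorbit q (i + d)) = Uorbit q d $ 2"
proof (induction i)
  case 0
  show ?case by (simp add: Uorbit_0 wedge_def)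
next
  case (Suc i)
  then show ?case by (simp add: Uorbit_Suc wedge_Umat)
qed

lemma sin_ratio_Suc_Suc: "sin_ratio q (Suc (Suc k)) = lam q * sin_ratio q (Suc k) - sin_ratio q k"
proof -
  define t where "t = pi / real q"
  define a where "a = real (Suc k) * t"
  have "real (Suc (Suc k)) * t = a + t" "real k * t = a - t"
    by (simp_all add: a_def algebra_simps)
  moreover have "sin (a + t) = 2 * cos t * sin a - sin (a - t)"
    by (simp add: sin_add sin_diff algebra_simps)
  ultimately show ?thesis unfolding sin_ratio_def lam_def t_def[symmetric] a_def[symmetric]
    by (simp add: diff_divide_distrib)
qed

locale hecke_index =
  fixes q :: nat
  assumes q_ge3: "3 \<le> q"
begin

lemma pi_div_q_pos: "0 < pi / real q" and pi_div_q_less_pi: "pi / real q < pi"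
  using q_ge3 by (simp_all add: divide_less_eq)

lemma sin_pi_div_q_pos: "0 < sin (pi / real q)"
  using pi_div_q_pos pi_div_q_less_pi by (rule sin_gt_zero)

lemma lam_pos: "0 < lam q"
proof -
  have "pi / real q < pi / 2" using q_ge3 pi_gt_zero by (simp add: field_simps)
  then have "0 < cos (pi / real q)" using pi_div_q_pos by (intro cos_gt_zero_pi) simp_all
  then show ?thesis by (simp add: lam_def)
qed

lemma lam_less_2: "lam q < 2"
proof -
  have "cos (pi / real q) < cos 0"
    using pi_div_q_pos pi_div_q_less_pi by (intro cos_monotone_0_pi) simp_all
  then show ?thesis by (simp add: lam_def)
qed

lemma Uorbit_eq: "Uorbit q j = vector [sin_ratio q (Suc j), sin_ratio q j]"
proof (induction j)
  case 0
  show ?case using sin_pi_div_q_pos by (simp add: Uorbit_0 e1_def sin_ratio_def)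
next
  case (Suc j)
  then show ?case by (simp add: Uorbit_Suc vec2_eq_iff sin_ratio_Suc_Suc)
qed

lemma Uorbit_nth: "Uorbit q j $1 = sin_ratio q (Suc j)" "Uorbit q j $2 = sin_ratio q j"
  by (simp_all add: Uorbit_eq)

text \<open>For \<open>0 < k < q\<close> the angle \<open>k\<pi>/q\<close> lies in \<open>[\<pi>/q, \<pi> - \<pi>/q]\<close>, where the sine is at least
  \<open>sin (\<pi>/q)\<close>.\<close>
lemma sin_ratio_ge_1: assumes "1 \<le> k" "k \<le> q - 1" shows "1 \<le> sin_ratio q k"
proof -
  define t where "t = pi / real q"
  have t0: "0 < t" using q_ge3 t_def by simp
  have "real k \<le> real q - 1" using assms q_ge3 by linarith
  then have "real k * t \<le> (real q - 1) * t" using t0 by (simp add: mult_right_mono)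
  also have "\<dots> = pi - t" using q_ge3 by (simp add: t_def field_simps)
  finally have kt_le: "real k * t \<le> pi - t" .
  have kt_ge: "t \<le> real k * t" using assms t0 by simp
  have "sin t \<le> sin (real k * t)"
  proof (cases "real k * t \<le> pi / 2")
    case True
    then show ?thesis using sin_monotone_2pi_le[of t "real k * t"] kt_ge t0 by linarith
  next
    case False
    then have "sin t \<le> sin (pi - real k * t)"
      using sin_monotone_2pi_le[of t "pi - real k * t"] kt_le t0 by linarith
    then show ?thesis by simp
  qed
  then show ?thesis unfolding sin_ratio_def t_def[symmetric] using sin_pi_div_q_pos t_def by simp
qed

lemma sin_ratio_nonneg: assumes "k \<le> q" shows "0 \<le> sin_ratio q k"
proof -
  have "real k * (pi / real q) \<le> pi" using assms q_ge3 by (simp add: field_simps)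
  then have "0 \<le> sin (real k * (pi / real q))" using pi_div_q_pos by (intro sin_ge_zero) auto
  then show ?thesis unfolding sin_ratio_def using sin_pi_div_q_pos by simp
qed

lemma Uorbit_last: "Uorbit q (q - 1) = e2"
proof -
  have "real (q - 1) * (pi / real q) = pi - pi / real q" "real (Suc (q - 1)) = real q"
    using q_ge3 by (simp_all add: field_simps)
  then show ?thesis using sin_pi_div_q_pos by (simp add: Uorbit_eq vec2_eq_iff sin_ratio_def)
qed

lemma Uorbit_bounds: assumes "j < q - 1"
  shows "1 \<le> Uorbit q j $1" "0 \<le> Uorbit q j $2" "0 \<le> Uorbit q (Suc j) $1" "1 \<le> Uorbit q (Suc j) $2"
    "0 < j \<Longrightarrow> 1 \<le> Uorbit q j $2" "Suc j < q - 1 \<Longrightarrow> 1 \<le> Uorbit q (Suc j) $1"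
  using assms by (auto simp: Uorbit_nth intro!: sin_ratio_ge_1 sin_ratio_nonneg)

lemma wedge_Uorbit: "i \<le> l \<Longrightarrow> wedge (Uorbit q i) (Uorbit q l) = sin_ratio q (l - i)"
  using wedge_Uorbit_shift[of q i "l - i"] by (simp add: Uorbit_nth)

lemma wedge_Uorbit_Suc: "wedge (Uorbit q j) (Uorbit q (Suc j)) = 1"
  using wedge_Uorbit[of j "Suc j"] sin_pi_div_q_pos by (simp add: sin_ratio_def)

end

section \<open>The Stern--Brocot refinement\<close>

lemma sb_step_ne: "l \<noteq> [] \<Longrightarrow> sb_step q l \<noteq> []"
  by (induction q l rule: sb_step.induct) auto

lemma sb_step_last: "l \<noteq> [] \<Longrightarrow> last (sb_step q l) = last l"
  by (induction q l rule: sb_step.induct) (auto simp: sb_step_ne)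

lemma sb_step_Cons_Cons_eq:
  assumes "2 \<le> q"
  shows "sb_step q (v # w # rest)
    = v # map (\<lambda>j. xq q j *\<^sub>R v + yq q j *\<^sub>R w) [1..<q - 1] @ sb_step q (w # rest)"
proof -
  have "[0..<q - 1] = 0 # [1..<q - 1]" using assms by (simp add: upt_rec)
  then show ?thesis by (simp add: xq_def yq_def e1_def)
qed

lemma sb_step_hd: "2 \<le> q \<Longrightarrow> l \<noteq> [] \<Longrightarrow> hd (sb_step q l) = hd l"
  by (induction q l rule: sb_step.induct) (simp_all add: sb_step_Cons_Cons_eq del: sb_step.simps(3))

lemma sb_step_set_mono: "2 \<le> q \<Longrightarrow> set l \<subseteq> set (sb_step q l)"
  by (induction q l rule: sb_step.induct) (auto simp: sb_step_Cons_Cons_eq simp del: sb_step.simps(3))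

lemma sb_step_append: "sb_step q (xs @ v # ys) = butlast (sb_step q (xs @ [v])) @ sb_step q (v # ys)"
proof (induction xs rule: induct_list012)
  case (3 x y zs)
  then show ?case using sb_step_ne[of "y # zs @ [v]" q] by (simp add: butlast_append)
qed simp_all

lemma sb_iter_ne: "l \<noteq> [] \<Longrightarrow> (sb_step q ^^ n) l \<noteq> []"
  by (induction n) (auto simp: sb_step_ne)

lemma sb_iter_last: "l \<noteq> [] \<Longrightarrow> last ((sb_step q ^^ n) l) = last l"
  by (induction n) (auto simp: sb_step_last sb_iter_ne)

lemma sb_iter_hd: "2 \<le> q \<Longrightarrow> l \<noteq> [] \<Longrightarrow> hd ((sb_step q ^^ n) l) = hd l"
  by (induction n) (auto simp: sb_step_hd sb_iter_ne)

lemma sb_iter_snoc_split: "(sb_step q ^^ n) (l @ [v]) = butlast ((sb_step q ^^ n) (l @ [v])) @ [v]"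
  using append_butlast_last_id[OF sb_iter_ne[of "l @ [v]" n q]] sb_iter_last[of "l @ [v]" n q] by simp

lemma sb_iter_Cons_split: "2 \<le> q \<Longrightarrow> (sb_step q ^^ n) (v # l) = v # tl ((sb_step q ^^ n) (v # l))"
  using list.collapse[OF sb_iter_ne[of "v # l" n q]] sb_iter_hd[of q "v # l" n] by simp

lemma sb_iter_append:
  assumes "2 \<le> q"
  shows "(sb_step q ^^ n) (xs @ v # ys) = butlast ((sb_step q ^^ n) (xs @ [v])) @ (sb_step q ^^ n) (v # ys)"
proof (induction n)
  case (Suc n)
  define X where "X = (sb_step q ^^ n) (xs @ [v])"
  define Y where "Y = (sb_step q ^^ n) (v # ys)"
  have X: "X = butlast X @ [v]"
    unfolding X_def by (rule sb_iter_snoc_split)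
  have Y: "Y = v # tl Y"
    unfolding Y_def using assms by (rule sb_iter_Cons_split)
  have "(sb_step q ^^ Suc n) (xs @ v # ys) = sb_step q (butlast X @ v # tl Y)"
    using Suc Y by (simp add: X_def Y_def)
  also have "\<dots> = butlast (sb_step q (butlast X @ [v])) @ sb_step q (v # tl Y)"
    by (rule sb_step_append)
  also have "\<dots> = butlast (sb_step q X) @ sb_step q Y"
    using X Y by metis
  finally show ?case by (simp add: X_def Y_def)
qed simp

lemma set_sb_iter_append:
  assumes "2 \<le> q"
  shows "set ((sb_step q ^^ n) (xs @ v # ys))
    = set ((sb_step q ^^ n) (xs @ [v])) \<union> set ((sb_step q ^^ n) (v # ys))"
proof -
  have "set ((sb_step q ^^ n) (xs @ [v])) = set (butlast ((sb_step q ^^ n) (xs @ [v]))) \<union> {v}"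
    by (subst sb_iter_snoc_split) auto
  moreover have "v \<in> set ((sb_step q ^^ n) (v # ys))"
    by (subst sb_iter_Cons_split[OF assms]) simp
  ultimately show ?thesis
    by (auto simp: sb_iter_append[OF assms, of n xs v ys])
qed

lemma sb_list_eq_iter: "sb_list q v w n = (sb_step q ^^ n) [v, w]"
  by (induction n) auto

lemma map_sb_step:
  assumes "\<And>a b x y. f (a *\<^sub>R x + b *\<^sub>R y) = a *\<^sub>R f x + b *\<^sub>R f y"
  shows "map f (sb_step q l) = sb_step q (map f l)"
  by (induction q l rule: sb_step.induct) (auto simp: assms)

lemma map_sb_iter:
  assumes "\<And>a b x y. f (a *\<^sub>R x + b *\<^sub>R y) = a *\<^sub>R f x + b *\<^sub>R f y"
  shows "map f ((sb_step q ^^ n) l) = (sb_step q ^^ n) (map f l)"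
  by (induction n) (auto simp: map_sb_step[OF assms])

definition sb_set :: "nat \<Rightarrow> nat \<Rightarrow> (real^2) set" where
  "sb_set q n = set (sb_list q e1 e2 n)"

lemma set_sb_list: "set (sb_list q p r n) = frame_map p r ` sb_set q n"
proof -
  have "map (frame_map p r) ((sb_step q ^^ n) [e1, e2]) = (sb_step q ^^ n) [p, r]"
    using map_sb_iter[where f = "frame_map p r" and q = q and n = n and l = "[e1, e2]"] frame_map_linear
    by simp
  then show ?thesis by (metis sb_set_def sb_list_eq_iter set_map)
qed

lemma sb_set_0: "sb_set q 0 = {e1, e2}"
  by (simp add: sb_set_def)

abbreviation branch :: "nat \<Rightarrow> nat \<Rightarrow> real^2 \<Rightarrow> real^2" where
  "branch q j \<equiv> frame_map (Uorbit q j) (Uorbit q (Suc j))"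

context hecke_index
begin

lemma q_ge2: "2 \<le> q"
  using q_ge3 by simp

lemma sb_step_basis: "sb_step q [e1, e2] = map (Uorbit q) [0..<q]"
proof -
  have "xq q j *\<^sub>R e1 + yq q j *\<^sub>R e2 = Uorbit q j" for j
    by (simp add: vec2_eq_iff xq_yq_Uorbit)
  then have "sb_step q [e1, e2] = map (Uorbit q) [0..<q - 1] @ [Uorbit q (q - 1)]"
    using Uorbit_last by simp
  also have "\<dots> = map (Uorbit q) [0..<q]"
    using q_ge3 by (cases q) simp_all
  finally show ?thesis .
qed

lemma set_sb_iter_Uorbit:
  "set ((sb_step q ^^ n) (map (Uorbit q) [0..<Suc (Suc k)]))
   = (\<Union>j\<le>k. set ((sb_step q ^^ n) [Uorbit q j, Uorbit q (Suc j)]))"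
proof (induction k)
  case (Suc k)
  have "map (Uorbit q) [0..<Suc (Suc (Suc k))]
      = map (Uorbit q) [0..<Suc k] @ Uorbit q (Suc k) # [Uorbit q (Suc (Suc k))]"
    by simp
  moreover have "map (Uorbit q) [0..<Suc k] @ [Uorbit q (Suc k)] = map (Uorbit q) [0..<Suc (Suc k)]"
    by simp
  ultimately have "set ((sb_step q ^^ n) (map (Uorbit q) [0..<Suc (Suc (Suc k))]))
      = set ((sb_step q ^^ n) (map (Uorbit q) [0..<Suc (Suc k)]))
        \<union> set ((sb_step q ^^ n) [Uorbit q (Suc k), Uorbit q (Suc (Suc k))])"
    by (simp only: set_sb_iter_append[OF q_ge2])
  then show ?case
    unfolding Suc.IH atMost_Suc by blast
qed simp

lemma sb_set_Suc: "sb_set q (Suc n) = (\<Union>j<q - 1. branch q j ` sb_set q n)"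
proof -
  have q: "Suc (Suc (q - 2)) = q"
    using q_ge3 by simp
  have "sb_set q (Suc n) = set ((sb_step q ^^ n) (map (Uorbit q) [0..<Suc (Suc (q - 2))]))"
    unfolding sb_set_def sb_list_eq_iter funpow_Suc_right o_apply sb_step_basis q ..
  also have "\<dots> = (\<Union>j\<le>q - 2. set ((sb_step q ^^ n) [Uorbit q j, Uorbit q (Suc j)]))"
    by (rule set_sb_iter_Uorbit)
  also have "\<dots> = (\<Union>j\<le>q - 2. branch q j ` sb_set q n)"
    by (simp only: set_sb_list[symmetric] sb_list_eq_iter)
  also have "{..q - 2} = {..<q - 1}"
    using q_ge3 by auto
  finally show ?thesis .
qed

lemma branch_in_sb_set: "j < q - 1 \<Longrightarrow> z \<in> sb_set q n \<Longrightarrow> branch q j z \<in> sb_set q (Suc n)"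
  by (auto simp: sb_set_Suc)

lemma sb_set_mono: "m \<le> n \<Longrightarrow> sb_set q m \<subseteq> sb_set q n"
  by (rule lift_Suc_mono_le[of "sb_set q"])
    (use sb_step_set_mono[OF q_ge2] in \<open>simp_all add: sb_set_def\<close>)

lemma basis_in_sb_set: "e1 \<in> sb_set q n" "e2 \<in> sb_set q n"
  using sb_set_mono[of 0 n] by (auto simp: sb_set_0)

lemma sb_set_SucE:
  assumes "z \<in> sb_set q (Suc n)"
  obtains j a where "j < q - 1" "a \<in> sb_set q n" "z = branch q j a"
  using assms by (auto simp: sb_set_Suc)

end

definition basis_or_large :: "real^2 \<Rightarrow> bool" where
  "basis_or_large z \<longleftrightarrow> z = e1 \<or> z = e2 \<or> (1 \<le> z$1 \<and> 1 \<le> z$2)"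

lemma basis_or_large_nonneg:
  "basis_or_large z \<Longrightarrow> 0 \<le> z$1 \<and> 0 \<le> z$2 \<and> 1 \<le> z$1 + z$2"
  unfolding basis_or_large_def by auto

lemma weighted_sum_ge:
  fixes A B c d :: real
  assumes "1 \<le> A" "1 \<le> B" "(2 \<le> c \<and> 1 \<le> d) \<or> (1 \<le> c \<and> 2 \<le> d)"
  shows "A + B + 1 \<le> c * A + d * B"
proof -
  have "1 * A \<le> c * A" "1 * B \<le> d * B" "2 * A \<le> c * A \<or> 2 * B \<le> d * B"
    using assms by (auto intro: mult_right_mono)
  then show ?thesis using assms(1,2) by linarith
qed

text \<open>Expanding the wedge in the two frames gives a sum of non-negative terms whose leading part
  is already \<open>\<ge> 1\<close>.\<close>
lemma frame_map_wedge_ge_1: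
  assumes a: "basis_or_large a" and b: "basis_or_large b"
    and w: "1 \<le> wedge p p'" "1 \<le> wedge p r'" "0 \<le> wedge r p'" "1 \<le> wedge r r'"
    and corner: "a = e2 \<Longrightarrow> b = e1 \<Longrightarrow> 1 \<le> wedge r p'"
  shows "1 \<le> wedge (frame_map p r a) (frame_map p' r' b)"
proof -
  have pa: "0 \<le> a$1" "0 \<le> a$2" and pb: "0 \<le> b$1" "0 \<le> b$2" "1 \<le> b$1 + b$2"
    using basis_or_large_nonneg[OF a] basis_or_large_nonneg[OF b] by auto
  have t: "0 \<le> a$1*b$1*wedge p p'" "0 \<le> a$1*b$2*wedge p r'"
    "0 \<le> a$2*b$1*wedge r p'" "0 \<le> a$2*b$2*wedge r r'"
    using pa pb w by simp_all
  show ?thesis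
  proof (cases "1 \<le> a$1")
    case True
    then have "1 \<le> a$1 * wedge p p'" "1 \<le> a$1 * wedge p r'"
      using w mult_ge1_I by simp_all
    then have "b$1 * 1 \<le> b$1 * (a$1 * wedge p p')" "b$2 * 1 \<le> b$2 * (a$1 * wedge p r')"
      using pb by (simp_all only: mult_left_mono)
    then show ?thesis using t pb by (simp add: wedge_frame_map_expand algebra_simps)
  next
    case False
    then have a_e2: "a = e2" using a unfolding basis_or_large_def by auto
    show ?thesis
    proof (cases "1 \<le> b$2")
      case True
      then have "1 \<le> a$2*b$2*wedge r r'" using a_e2 w mult_ge1_I by simp
      then show ?thesis using t by (simp add: wedge_frame_map_expand)
    next
      case False
      then have "b = e1" using b unfolding basis_or_large_def by auto
      then show ?thesis using a_e2 corner by (simp add: wedge_frame_map_expand)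
    qed
  qed
qed

context hecke_index
begin

lemma branch_basis_or_large:
  assumes j: "j < q - 1" and a: "basis_or_large a"
  shows "basis_or_large (branch q j a)"
proof -
  note bounds = Uorbit_bounds[OF j]
  consider "a = e1" | "a = e2" | "1 \<le> a$1" "1 \<le> a$2"
    using a basis_or_large_def by auto
  then show ?thesis
  proof cases
    case 1
    then show ?thesis using bounds by (cases "j = 0") (simp_all add: Uorbit_0 basis_or_large_def)
  next
    case 2
    then show ?thesis using bounds Uorbit_last j
      by (cases "Suc j = q - 1") (auto simp: basis_or_large_def)
  next
    case 3
    then have "1 \<le> a$1 * Uorbit q j $1" "1 \<le> a$2 * Uorbit q (Suc j) $2"
      "0 \<le> a$2 * Uorbit q (Suc j) $1" "0 \<le> a$1 * Uorbit q j $2"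
      using bounds mult_ge1_I by simp_all
    then show ?thesis by (simp add: basis_or_large_def)
  qed
qed

lemma sb_set_basis_or_large: "z \<in> sb_set q n \<Longrightarrow> basis_or_large z"
proof (induction n arbitrary: z)
  case 0
  then show ?case by (auto simp: sb_set_0 basis_or_large_def)
next
  case (Suc n)
  then show ?case by (metis sb_set_SucE branch_basis_or_large)
qed

lemma wedge_branches_ge_1:
  assumes jk: "j < k" "k < q - 1" and a: "basis_or_large a" and b: "basis_or_large b"
    and ne: "branch q j a \<noteq> branch q k b"
  shows "1 \<le> wedge (branch q j a) (branch q k b)"
proof (rule frame_map_wedge_ge_1[OF a b])
  show "1 \<le> wedge (Uorbit q j) (Uorbit q k)" "1 \<le> wedge (Uorbit q j) (Uorbit q (Suc k))"
    "0 \<le> wedge (Uorbit q (Suc j)) (Uorbit q k)" "1 \<le> wedge (Uorbit q (Suc j)) (Uorbit q (Suc k))"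
    using jk by (simp_all add: wedge_Uorbit sin_ratio_ge_1 sin_ratio_nonneg)
  assume "a = e2" "b = e1"
  then have "k \<noteq> Suc j" using ne by auto
  then show "1 \<le> wedge (Uorbit q (Suc j)) (Uorbit q k)"
    using jk by (simp add: wedge_Uorbit sin_ratio_ge_1)
qed

lemma sb_set_abs_wedge_ge_1:
  "z \<in> sb_set q n \<Longrightarrow> z' \<in> sb_set q n \<Longrightarrow> z \<noteq> z' \<Longrightarrow> 1 \<le> \<bar>wedge z z'\<bar>"
proof (induction n arbitrary: z z')
  case 0
  then show ?case by (auto simp: sb_set_0 wedge_def)
next
  case (Suc n)
  obtain j a where j: "j < q - 1" "a \<in> sb_set q n" "z = branch q j a"
    using Suc.prems(1) by (rule sb_set_SucE)
  obtain k b where k: "k < q - 1" "b \<in> sb_set q n" "z' = branch q k b"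
    using Suc.prems(2) by (rule sb_set_SucE)
  have ab: "basis_or_large a" "basis_or_large b"
    using j k sb_set_basis_or_large by auto
  consider "j = k" | "j < k" | "k < j" by linarith
  then show ?case
  proof cases
    case 1
    then have "wedge z z' = wedge a b" "a \<noteq> b"
      using j k Suc.prems by (auto simp: wedge_frame_map wedge_Uorbit_Suc)
    then show ?thesis using Suc.IH j k by simp
  next
    case 2
    then show ?thesis using wedge_branches_ge_1[of j k a b] j k ab Suc.prems by fastforce
  next
    case 3
    then show ?thesis using wedge_branches_ge_1[of k j b a] j k ab Suc.prems wedge_antisym[of z z']
      by fastforce
  qed
qed

lemma inner_or_first_branch: "j < q - 1 \<Longrightarrow> 0 < j \<or> Suc j < q - 1"
  using q_ge3 by auto

lemma branch_coord_sum:
  assumes j: "j < q - 1" and a: "1 \<le> a$1" "1 \<le> a$2"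
  shows "a$1 + a$2 + 1 \<le> branch q j a $1 + branch q j a $2"
proof -
  note bounds = Uorbit_bounds[OF j]
  have "(2 \<le> Uorbit q j $1 + Uorbit q j $2 \<and> 1 \<le> Uorbit q (Suc j) $1 + Uorbit q (Suc j) $2)
      \<or> (1 \<le> Uorbit q j $1 + Uorbit q j $2 \<and> 2 \<le> Uorbit q (Suc j) $1 + Uorbit q (Suc j) $2)"
    using bounds inner_or_first_branch[OF j] by auto
  then have "a$1 + a$2 + 1
      \<le> (Uorbit q j $1 + Uorbit q j $2) * a$1 + (Uorbit q (Suc j) $1 + Uorbit q (Suc j) $2) * a$2"
    by (rule weighted_sum_ge[OF a])
  then show ?thesis by (simp add: algebra_simps)
qed

lemma frame_branch_coord_sum:
  assumes j: "j < q - 1" and AB: "1 \<le> A" "1 \<le> B"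
  shows "A + B + 1
    \<le> (Uorbit q j $1 + Uorbit q (Suc j) $1) * A + (Uorbit q j $2 + Uorbit q (Suc j) $2) * B"
proof -
  note bounds = Uorbit_bounds[OF j]
  have "(2 \<le> Uorbit q j $1 + Uorbit q (Suc j) $1 \<and> 1 \<le> Uorbit q j $2 + Uorbit q (Suc j) $2)
      \<or> (1 \<le> Uorbit q j $1 + Uorbit q (Suc j) $1 \<and> 2 \<le> Uorbit q j $2 + Uorbit q (Suc j) $2)"
    using bounds inner_or_first_branch[OF j] by auto
  then show ?thesis by (rule weighted_sum_ge[OF AB])
qed

lemma sb_set_new_coord_sum:
  "z \<in> sb_set q (Suc n) \<Longrightarrow> z \<notin> sb_set q n \<Longrightarrow> real n + 2 \<le> z$1 + z$2"
proof (induction n arbitrary: z)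
  case 0
  then have "basis_or_large z" "z \<noteq> e1" "z \<noteq> e2"
    using sb_set_basis_or_large by (auto simp: sb_set_0)
  then show ?case unfolding basis_or_large_def by auto
next
  case (Suc n)
  obtain j a where j: "j < q - 1" "a \<in> sb_set q (Suc n)" "z = branch q j a"
    using Suc.prems(1) by (rule sb_set_SucE)
  have "a \<notin> sb_set q n"
    using j Suc.prems(2) branch_in_sb_set by blast
  then have "real n + 2 \<le> a$1 + a$2" "a \<noteq> e1" "a \<noteq> e2"
    using Suc.IH j(2) basis_in_sb_set by auto
  moreover have "1 \<le> a$1" "1 \<le> a$2"
    using sb_set_basis_or_large[OF j(2)] calculation(2,3) basis_or_large_def by auto
  ultimately show ?case using branch_coord_sum[OF j(1)] j(3) by force
qed

lemma branch_eq_matrix: "branch q j z = Upow q j *v (Tmat q *v z)"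
proof -
  have "Upow q j ** Umat q = Umat q ** Upow q j"
    by (induction j) (simp_all add: matrix_mul_assoc[symmetric])
  moreover have "Tmat q *v z = frame_map e1 (Umat q *v e1) z"
    by (simp add: vec2_eq_iff)
  ultimately show ?thesis
    by (simp add: matrix_vector_mult_frame_map matrix_vector_mul_assoc Uorbit_def)
qed

lemma sb_set_subset_Lambda: "sb_set q n \<subseteq> Lambda q"
proof (induction n)
  case 0
  show ?case using e1_in_Lambda e2_in_Lambda by (simp add: sb_set_0)
next
  case (Suc n)
  have "branch q j a \<in> Lambda q" if "a \<in> Lambda q" for j a
    unfolding branch_eq_matrix using that
    by (intro Lambda_closed Upow_in_hecke_group generators_in_hecke_group)
  then show ?case using Suc by (auto simp: sb_set_Suc)
qed

end

section \<open>Discreteness of \<open>\<Lambda>_q\<close>\<close>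

definition Uinv :: "nat \<Rightarrow> real^2 \<Rightarrow> real^2" where
  "Uinv q z = vector [z$2, lam q * z$2 - z$1]"

lemma Uinv_nth [simp]: "Uinv q z $1 = z$2" "Uinv q z $2 = lam q * z$2 - z$1"
  by (simp_all add: Uinv_def)

lemma Uinv_Uorbit: "Uinv q (Uorbit q (Suc j)) = Uorbit q j"
  by (simp add: Uorbit_Suc vec2_eq_iff)

lemma Uinv_frame_map: "Uinv q (frame_map p r z) = frame_map (Uinv q p) (Uinv q r) z"
  by (simp add: vec2_eq_iff algebra_simps)

definition quadrant_copies :: "nat \<Rightarrow> (real^2) set" where
  "quadrant_copies q =
    {u. \<exists>n z. z \<in> sb_set q n \<and> (u = z \<or> u = -z \<or> u = Smat *v z \<or> u = -(Smat *v z))}"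

lemma quadrant_copiesI:
  assumes "z \<in> sb_set q n"
  shows "z \<in> quadrant_copies q" "-z \<in> quadrant_copies q"
    "Smat *v z \<in> quadrant_copies q" "-(Smat *v z) \<in> quadrant_copies q"
  using assms unfolding quadrant_copies_def by blast+

lemma quadrant_copiesE:
  assumes "u \<in> quadrant_copies q"
  obtains n z where "z \<in> sb_set q n" "u = z \<or> u = -z \<or> u = Smat *v z \<or> u = -(Smat *v z)"
  using assms unfolding quadrant_copies_def by blast

lemma linear_maps_minus:
  "Smat *v (-x) = - (Smat *v x)" "Umat q *v (-x) = - (Umat q *v x)" "Uinv q (-x) = - Uinv q x"
  by (simp_all add: vec2_eq_iff)

lemma Smat_Smat: "Smat *v (Smat *v x) = - x"
  by (simp add: vec2_eq_iff)

lemma quadrant_copies_uminus: "u \<in> quadrant_copies q \<Longrightarrow> -u \<in> quadrant_copies q"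
  by (erule quadrant_copiesE) (auto intro: quadrant_copiesI)

lemma quadrant_copies_Smat: "u \<in> quadrant_copies q \<Longrightarrow> Smat *v u \<in> quadrant_copies q"
  by (erule quadrant_copiesE) (auto simp: linear_maps_minus Smat_Smat intro: quadrant_copiesI)

context hecke_index
begin

lemma sb_set_branchE:
  assumes "z \<in> sb_set q n"
  obtains j a where "j < q - 1" "a \<in> sb_set q n" "z = branch q j a"
proof -
  have "z \<in> sb_set q (Suc n)" using assms sb_set_mono[of n "Suc n"] by auto
  then show thesis using that by (rule sb_set_SucE)
qed

text \<open>\<open>U_q\<close> shifts every branch to the next one; the last branch is sent to the \<open>S\<close>-rotated standard
  quadrant.\<close>
lemma Umat_mult_sb_set: assumes "z \<in> sb_set q n" shows "Umat q *v z \<in> quadrant_copies q"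
proof -
  obtain j a where j: "j < q - 1" "a \<in> sb_set q n" "z = branch q j a"
    using assms by (rule sb_set_branchE)
  have Uz: "Umat q *v z = branch q (Suc j) a"
    using j by (simp add: matrix_vector_mult_frame_map Uorbit_Suc)
  show ?thesis
  proof (cases "Suc j < q - 1")
    case True
    then show ?thesis using Uz j branch_in_sb_set quadrant_copiesI(1) by metis
  next
    case False
    then have "Suc j = q - 1" using j by simp
    then have "Uorbit q (Suc j) = e2" using Uorbit_last by simp
    then have "Umat q *v z = frame_map e2 (Umat q *v e2) a"
      unfolding Uz Uorbit_Suc[of q "Suc j"] by simp
    also have "\<dots> = Smat *v a"
      by (simp add: vec2_eq_iff)
    finally have "Umat q *v z = Smat *v a" .
    then show ?thesis using j quadrant_copiesI(3) by metis
  qed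
qed

lemma Umat_mult_Smat_sb_set:
  assumes "z \<in> sb_set q n" shows "Umat q *v (Smat *v z) \<in> quadrant_copies q"
proof -
  have "Umat q *v (Smat *v z) = - branch q 0 z"
    by (simp add: Uorbit_0 Uorbit_1 vec2_eq_iff)
  then show ?thesis using branch_in_sb_set[OF _ assms, of 0] q_ge3 quadrant_copiesI(2) by fastforce
qed

lemma Uinv_sb_set: assumes "z \<in> sb_set q n" shows "Uinv q z \<in> quadrant_copies q"
proof -
  obtain j a where j: "j < q - 1" "a \<in> sb_set q n" "z = branch q j a"
    using assms by (rule sb_set_branchE)
  have Uz: "Uinv q z = frame_map (Uinv q (Uorbit q j)) (Uorbit q j) a"
    using j by (simp add: Uinv_frame_map Uinv_Uorbit)
  show ?thesis
  proof (cases j)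
    case (Suc i)
    then have "Uinv q z = branch q i a" using Uz by (simp add: Uinv_Uorbit)
    then show ?thesis using Suc j branch_in_sb_set[of i a n] quadrant_copiesI(1) by simp
  next
    case 0
    then have "Uinv q z = frame_map (Uinv q e1) e1 a" using Uz by (simp add: Uorbit_0)
    also have "\<dots> = - (Smat *v a)" by (simp add: vec2_eq_iff)
    finally have "Uinv q z = - (Smat *v a)" .
    then show ?thesis using j quadrant_copiesI(4) by metis
  qed
qed

lemma Uinv_Smat_sb_set:
  assumes "z \<in> sb_set q n" shows "Uinv q (Smat *v z) \<in> quadrant_copies q"
proof -
  have i: "q - 2 < q - 1" "Suc (q - 2) = q - 1" using q_ge3 by auto
  have "Uorbit q (q - 2) = Uinv q e2"
    using Uinv_Uorbit[of q "q - 2"] i(2) Uorbit_last by simp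
  then have "branch q (q - 2) z = frame_map (Uinv q e2) e2 z"
    using i(2) Uorbit_last by simp
  also have "\<dots> = Uinv q (Smat *v z)"
    by (simp add: vec2_eq_iff algebra_simps)
  finally show ?thesis using branch_in_sb_set[OF i(1) assms] quadrant_copiesI(1) by metis
qed

lemma quadrant_copies_Umat: "u \<in> quadrant_copies q \<Longrightarrow> Umat q *v u \<in> quadrant_copies q"
  by (erule quadrant_copiesE)
    (auto simp: linear_maps_minus intro: Umat_mult_sb_set Umat_mult_Smat_sb_set
      quadrant_copies_uminus[OF Umat_mult_sb_set] quadrant_copies_uminus[OF Umat_mult_Smat_sb_set])

lemma quadrant_copies_Uinv: "u \<in> quadrant_copies q \<Longrightarrow> Uinv q u \<in> quadrant_copies q"
  by (erule quadrant_copiesE)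
    (auto simp: linear_maps_minus intro: Uinv_sb_set Uinv_Smat_sb_set
      quadrant_copies_uminus[OF Uinv_sb_set] quadrant_copies_uminus[OF Uinv_Smat_sb_set])

lemma Lambda_subset_quadrant_copies: "Lambda q \<subseteq> quadrant_copies q"
proof -
  have "A *v e1 \<in> quadrant_copies q" if "A \<in> hecke_group q" for A
    using that
  proof (induction A rule: hecke_group.induct)
    case id
    then show ?case using quadrant_copiesI(1)[OF basis_in_sb_set(1)] by simp
  next
    case (S A)
    then show ?case by (simp add: matrix_vector_mul_assoc[symmetric] quadrant_copies_Smat)
  next
    case (T A)
    have "Tmat q *v (A *v e1) = - (Umat q *v (Smat *v (A *v e1)))" by (simp add: vec2_eq_iff)
    then show ?case
      using T by (simp add: matrix_vector_mul_assoc[symmetric] quadrant_copies_Smat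
          quadrant_copies_Umat quadrant_copies_uminus)
  next
    case (Si A)
    have "Sinv *v (A *v e1) = - (Smat *v (A *v e1))" by (simp add: vec2_eq_iff)
    then show ?case
      using Si by (simp add: matrix_vector_mul_assoc[symmetric] quadrant_copies_Smat quadrant_copies_uminus)
  next
    case (Ti A)
    have "Tinv q *v (A *v e1) = Smat *v (Uinv q (A *v e1))" by (simp add: vec2_eq_iff)
    then show ?case
      using Ti by (simp add: matrix_vector_mul_assoc[symmetric] quadrant_copies_Smat quadrant_copies_Uinv)
  qed
  then show ?thesis unfolding Lambda_def by blast
qed

end

lemma wedge_Smat_simps:
  "wedge (Smat *v a) (Smat *v b) = wedge a b"
  "wedge a (Smat *v b) = a$1 * b$1 + a$2 * b$2"
  "wedge (Smat *v a) b = - (a$1 * b$1 + a$2 * b$2)"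
  "wedge (-a) b = - wedge a b" "wedge a (-b) = - wedge a b"
  by (simp_all add: wedge_def algebra_simps)

lemma basis_or_large_inner_ge_1:
  assumes "basis_or_large z" "basis_or_large z'" "z \<noteq> Smat *v z'" "z \<noteq> -(Smat *v z')"
  shows "1 \<le> z$1 * z'$1 + z$2 * z'$2"
proof -
  have nonneg: "0 \<le> z$1" "0 \<le> z$2" "1 \<le> z$1 + z$2" "0 \<le> z'$1" "0 \<le> z'$2" "1 \<le> z'$1 + z'$2"
    using basis_or_large_nonneg assms(1,2) by auto
  consider "1 \<le> z$1" "1 \<le> z$2" | "1 \<le> z'$1" "1 \<le> z'$2" | "z = e1 \<or> z = e2" "z' = e1 \<or> z' = e2"
    using assms(1,2) basis_or_large_def by auto
  then show ?thesis
  proof cases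
    case 1
    then have "z'$1 * 1 \<le> z'$1 * z$1" "z'$2 * 1 \<le> z'$2 * z$2"
      using nonneg by (simp_all only: mult_left_mono)
    then show ?thesis using nonneg by (simp add: algebra_simps)
  next
    case 2
    then have "z$1 * 1 \<le> z$1 * z'$1" "z$2 * 1 \<le> z$2 * z'$2"
      using nonneg by (simp_all only: mult_left_mono)
    then show ?thesis using nonneg by (simp add: algebra_simps)
  next
    case 3
    then show ?thesis using assms(3,4) by (auto simp: vec2_eq_iff)
  qed
qed

context hecke_index
begin

lemma abs_wedge_rotations_ge_1:
  assumes z: "z \<in> sb_set q n" "z' \<in> sb_set q n"
    and a: "a = z \<or> a = Smat *v z" and b: "b = z' \<or> b = Smat *v z'" and ab: "a \<noteq> b" "a \<noteq> -b"
  shows "1 \<le> \<bar>wedge a b\<bar>"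
proof -
  have large: "basis_or_large z" "basis_or_large z'"
    using z sb_set_basis_or_large by auto
  consider "a = z" "b = z'" | "a = z" "b = Smat *v z'" | "a = Smat *v z" "b = z'"
    | "a = Smat *v z" "b = Smat *v z'"
    using a b by blast
  then show ?thesis
  proof cases
    case 1
    then show ?thesis using ab sb_set_abs_wedge_ge_1[OF z] by simp
  next
    case 2
    then show ?thesis using ab basis_or_large_inner_ge_1[OF large] by (simp add: wedge_Smat_simps)
  next
    case 3
    then have "z' \<noteq> Smat *v z" "z' \<noteq> -(Smat *v z)" using ab by auto
    then show ?thesis using 3 basis_or_large_inner_ge_1[OF large(2,1)]
      by (simp add: wedge_Smat_simps algebra_simps)
  next
    case 4
    then have "z \<noteq> z'" using ab by auto
    then show ?thesis using 4 sb_set_abs_wedge_ge_1[OF z] by (simp add: wedge_Smat_simps(1))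
  qed
qed

lemma quadrant_copies_abs_wedge_ge_1:
  assumes u: "u \<in> quadrant_copies q" and u': "u' \<in> quadrant_copies q" and ne: "u \<noteq> u'" "u \<noteq> -u'"
  shows "1 \<le> \<bar>wedge u u'\<bar>"
proof -
  obtain n z where z: "z \<in> sb_set q n" "u = z \<or> u = -z \<or> u = Smat *v z \<or> u = -(Smat *v z)"
    using u by (rule quadrant_copiesE)
  obtain m z' where z': "z' \<in> sb_set q m" "u' = z' \<or> u' = -z' \<or> u' = Smat *v z' \<or> u' = -(Smat *v z')"
    using u' by (rule quadrant_copiesE)
  have zN: "z \<in> sb_set q (max n m)" "z' \<in> sb_set q (max n m)"
    using z(1) z'(1) sb_set_mono[of n "max n m"] sb_set_mono[of m "max n m"] by auto
  obtain a where a: "a = z \<or> a = Smat *v z" "u = a \<or> u = -a" using z(2) by blast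
  obtain b where b: "b = z' \<or> b = Smat *v z'" "u' = b \<or> u' = -b" using z'(2) by blast
  have "a \<noteq> b" "a \<noteq> -b" "\<bar>wedge u u'\<bar> = \<bar>wedge a b\<bar>"
    using a(2) b(2) ne by (auto simp: wedge_Smat_simps(4,5))
  then show ?thesis using abs_wedge_rotations_ge_1[OF zN a(1) b(1)] by simp
qed

theorem Lambda_abs_wedge_ge_1:
  "v0 \<in> Lambda q \<Longrightarrow> v1 \<in> Lambda q \<Longrightarrow> v0 \<noteq> v1 \<Longrightarrow> v0 \<noteq> - v1 \<Longrightarrow> 1 \<le> \<bar>wedge v0 v1\<bar>"
  using quadrant_copies_abs_wedge_ge_1 Lambda_subset_quadrant_copies by blast

end

section \<open>Unimodular pairs in \<open>\<Lambda>_q\<close>\<close>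

context hecke_index
begin

text \<open>The vectors \<open>y\<close> with \<open>e1 \<and> y = 1\<close> in \<open>\<Lambda>_q\<close> are the \<open>T_q^k e2\<close>: these lie on the line \<open>y$2 = 1\<close> with
  spacing \<open>\<lambda>_q < 2\<close>, so every point of that line is at distance \<open>< 1\<close> from one of them, and discreteness
  forbids two distinct points of \<open>\<Lambda>_q\<close> on it at distance \<open>< 1\<close>.\<close>
lemma Lambda_wedge_e1_eq_1:
  assumes y: "y \<in> Lambda q" "wedge e1 y = 1"
  shows "\<exists>k. y = Tpow q k *v e2"
proof -
  have y2: "y$2 = 1" using y(2) by (simp add: wedge_def)
  define k where "k = \<lfloor>y$1 / lam q + 1/2\<rfloor>"
  have "of_int k \<le> y$1 / lam q + 1/2" "y$1 / lam q + 1/2 < of_int k + 1"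
    unfolding k_def by linarith+
  then have "of_int k * lam q \<le> y$1 + lam q / 2" "y$1 - lam q / 2 < of_int k * lam q"
    using lam_pos by (simp_all add: field_simps)
  then have close: "\<bar>y$1 - of_int k * lam q\<bar> < 1"
    using lam_less_2 by linarith
  define t where "t = Tpow q k *v e2"
  have t: "t$1 = of_int k * lam q" "t$2 = 1"
    by (simp_all add: t_def matrix_vector_mult_2 Tpow_nth)
  have "t \<in> Lambda q"
    unfolding t_def using Lambda_closed[OF Tpow_in_hecke_group e2_in_Lambda] .
  moreover have "y \<noteq> - t" using y2 t by (auto simp: vec2_eq_iff)
  moreover have "\<bar>wedge y t\<bar> < 1" using close y2 t by (simp add: wedge_def)
  ultimately have "y = t" using Lambda_abs_wedge_ge_1[OF y(1)] by fastforce
  then show ?thesis unfolding t_def by blast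
qed

lemma unimodular_pair_eq_image:
  assumes u0: "u0 \<in> Lambda q" and u1: "u1 \<in> Lambda q" and w: "wedge u0 u1 = 1"
  shows "\<exists>g\<in>hecke_group q. g *v e1 = u0 \<and> g *v e2 = u1"
proof -
  obtain A where A: "A \<in> hecke_group q" "u0 = A *v e1"
    using u0 unfolding Lambda_def by blast
  obtain A' where A': "A' \<in> hecke_group q" "A' ** A = mat 1"
    using hecke_group_left_inverse[OF A(1)] by blast
  have "A' *v u0 = e1" using A A' by (simp add: matrix_vector_mul_assoc)
  then have "wedge e1 (A' *v u1) = 1"
    using wedge_matrix_vector_mult[of A' u0 u1] det_hecke_group[OF A'(1)] w by simp
  then obtain k where k: "A' *v u1 = Tpow q k *v e2"
    using Lambda_wedge_e1_eq_1 Lambda_closed[OF A'(1) u1] by blast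
  define g where "g = A ** Tpow q k"
  have "g \<in> hecke_group q"
    unfolding g_def using hecke_group_mult A(1) Tpow_in_hecke_group by blast
  moreover have "g *v e1 = u0"
    using A by (simp add: g_def matrix_vector_mul_assoc[symmetric] matrix_vector_mult_2
        matrix_matrix_mult_2_nth Tpow_nth vec2_eq_iff)
  moreover have "g *v e2 = A *v (A' *v u1)"
    by (simp add: g_def k matrix_vector_mul_assoc)
  moreover have "A ** A' = mat 1"
    using A'(2) matrix_left_right_inverse by blast
  then have "A *v (A' *v u1) = u1"
    by (simp add: matrix_vector_mul_assoc)
  ultimately show ?thesis by metis
qed

lemma frame_map_sb_set_subset_Lambda:
  assumes "u0 \<in> Lambda q" "u1 \<in> Lambda q" "wedge u0 u1 = 1"
  shows "frame_map u0 u1 ` sb_set q n \<subseteq> Lambda q"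
proof -
  obtain g where g: "g \<in> hecke_group q" "g *v e1 = u0" "g *v e2 = u1"
    using unimodular_pair_eq_image assms by blast
  have "frame_map u0 u1 z = g *v z" for z
    using matrix_vector_mult_frame_map[of g e1 e2 z] g by (simp add: frame_map_basis)
  then show ?thesis using Lambda_closed[OF g(1)] sb_set_subset_Lambda by auto
qed

lemma not_parallel_sb_set:
  assumes "u0 \<in> Lambda q" "u1 \<in> Lambda q" "wedge u0 u1 = 1"
    and not_parallel: "\<forall>u\<in>Lambda q. \<forall>c. frame_map u0 u1 v \<noteq> c *\<^sub>R u"
  shows "\<forall>n. \<forall>z\<in>sb_set q n. \<forall>c. v \<noteq> c *\<^sub>R z"
proof (intro allI ballI notI)
  fix n z c assume "z \<in> sb_set q n" "v = c *\<^sub>R z"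
  then have "frame_map u0 u1 z \<in> Lambda q" "frame_map u0 u1 v = c *\<^sub>R frame_map u0 u1 z"
    using frame_map_sb_set_subset_Lambda[OF assms(1-3)] by (auto simp: frame_map_scaleR)
  then show False using not_parallel by blast
qed

end

section \<open>Nested cones\<close>

lemma exists_sign_change:
  fixes f :: "nat \<Rightarrow> real"
  assumes "0 < f 0" "\<not> 0 < f k"
  shows "\<exists>j<k. 0 < f j \<and> \<not> 0 < f (Suc j)"
  using assms(2)
proof (induction k)
  case (Suc k)
  then show ?case by (cases "0 < f k") (auto intro: less_SucI)
qed (use assms(1) in simp)

definition embedded_at :: "nat \<Rightarrow> nat \<Rightarrow> real^2 \<Rightarrow> real^2 \<Rightarrow> bool" where
  "embedded_at q N p r \<longleftrightarrow> (\<forall>m. frame_map p r ` sb_set q m \<subseteq> sb_set q (N + m))"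

lemma embedded_at_basis: "embedded_at q 0 e1 e2"
  by (simp add: embedded_at_def frame_map_basis)

context hecke_index
begin

lemma embedded_at_in_sb_set:
  assumes "embedded_at q N p r"
  shows "p \<in> sb_set q N" "r \<in> sb_set q N"
proof -
  have "frame_map p r ` sb_set q 0 \<subseteq> sb_set q N"
    using assms unfolding embedded_at_def by (metis add_0_right)
  then show "p \<in> sb_set q N" "r \<in> sb_set q N"
    by (auto simp: sb_set_0)
qed

lemma embedded_at_branch:
  assumes "embedded_at q N p r" "j < q - 1"
  shows "embedded_at q (Suc N) (frame_map p r (Uorbit q j)) (frame_map p r (Uorbit q (Suc j)))"
  unfolding embedded_at_def
proof (intro allI image_subsetI)
  fix m z assume "z \<in> sb_set q m"
  then have "branch q j z \<in> sb_set q (Suc m)"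
    using assms(2) by (rule branch_in_sb_set[rotated])
  then have "frame_map p r (branch q j z) \<in> sb_set q (N + Suc m)"
    using assms(1) unfolding embedded_at_def by blast
  then show "frame_map (frame_map p r (Uorbit q j)) (frame_map p r (Uorbit q (Suc j))) z
      \<in> sb_set q (Suc N + m)"
    by (simp add: frame_map_frame_map)
qed

lemma Uorbit_neq_0: "j \<le> q - 1 \<Longrightarrow> Uorbit q j \<noteq> 0"
  using Uorbit_last Uorbit_bounds(1)[of j] by (cases "j = q - 1") (auto simp: vec2_eq_iff)

lemma Uorbit_in_sb_set_1: "j \<le> q - 1 \<Longrightarrow> Uorbit q j \<in> sb_set q 1"
  using Uorbit_last basis_in_sb_set branch_in_sb_set[of j e1 0]
  by (cases "j = q - 1") auto

lemma open_quadrant_split: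
  assumes w: "0 < w$1" "0 < w$2" and not_parallel: "\<forall>j\<le>q - 1. \<forall>c. w \<noteq> c *\<^sub>R Uorbit q j"
  shows "\<exists>j<q - 1. \<exists>a b. 0 < a \<and> 0 < b \<and> w = a *\<^sub>R Uorbit q j + b *\<^sub>R Uorbit q (Suc j)"
proof -
  define f where "f j = wedge (Uorbit q j) w" for j
  have "0 < f 0" using w by (simp add: f_def Uorbit_0 wedge_def)
  moreover have "\<not> 0 < f (q - 1)" using w unfolding f_def Uorbit_last by (simp add: wedge_def)
  ultimately
  obtain j where j: "j < q - 1" "0 < f j" "\<not> 0 < f (Suc j)"
    using exists_sign_change by blast
  have "f (Suc j) \<noteq> 0"
  proof
    assume "f (Suc j) = 0"
    then obtain c where "w = c *\<^sub>R Uorbit q (Suc j)"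
      using wedge_eq_0_imp_parallel[OF Uorbit_neq_0[of "Suc j"], of w] j(1) by (auto simp: f_def)
    then show False using not_parallel j(1) by auto
  qed
  then have "0 < - f (Suc j)" using j(3) by simp
  moreover have "w = (- f (Suc j)) *\<^sub>R Uorbit q j + f j *\<^sub>R Uorbit q (Suc j)"
    using unimodular_decomp[OF wedge_Uorbit_Suc[of j], of w] by (simp add: f_def wedge_antisym[of w])
  ultimately show ?thesis using j by blast
qed

lemma nested_frame_step:
  assumes emb: "embedded_at q N p r" and pr: "wedge p r = 1" "0 < a" "0 < b"
    "v = a *\<^sub>R p + b *\<^sub>R r" "real N + 2 \<le> p$1 + p$2 + r$1 + r$2"
    and not_parallel: "\<forall>n. \<forall>z\<in>sb_set q n. \<forall>c. v \<noteq> c *\<^sub>R z"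
  shows "\<exists>p' r' a' b'. embedded_at q (Suc N) p' r' \<and> wedge p' r' = 1 \<and> 0 < a' \<and> 0 < b'
     \<and> v = a' *\<^sub>R p' + b' *\<^sub>R r' \<and> real (Suc N) + 2 \<le> p'$1 + p'$2 + r'$1 + r'$2"
proof -
  define w where "w = (vector [a, b] :: real^2)"
  have vw: "v = frame_map p r w" using pr(4) by (simp add: w_def frame_map_def)
  have w_pos: "0 < w$1" "0 < w$2" using pr(2,3) by (simp_all add: w_def)
  have w_not_parallel: "\<forall>j\<le>q - 1. \<forall>c. w \<noteq> c *\<^sub>R Uorbit q j"
  proof (intro allI impI notI)
    fix j c assume "j \<le> q - 1" "w = c *\<^sub>R Uorbit q j"
    moreover have "frame_map p r (Uorbit q j) \<in> sb_set q (N + 1)"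
      using emb \<open>j \<le> q - 1\<close> Uorbit_in_sb_set_1 unfolding embedded_at_def by blast
    ultimately show False using vw not_parallel by (metis frame_map_scaleR)
  qed
  obtain j a' b' where j: "j < q - 1" "0 < a'" "0 < b'"
    "w = a' *\<^sub>R Uorbit q j + b' *\<^sub>R Uorbit q (Suc j)"
    using open_quadrant_split[OF w_pos w_not_parallel] by blast
  define p' where "p' = frame_map p r (Uorbit q j)"
  define r' where "r' = frame_map p r (Uorbit q (Suc j))"
  have "1 \<le> p$1 + p$2" "1 \<le> r$1 + r$2"
    using embedded_at_in_sb_set[OF emb] sb_set_basis_or_large basis_or_large_nonneg by auto
  then have "p$1 + p$2 + (r$1 + r$2) + 1 \<le> (Uorbit q j $1 + Uorbit q (Suc j) $1) * (p$1 + p$2)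
      + (Uorbit q j $2 + Uorbit q (Suc j) $2) * (r$1 + r$2)"
    by (rule frame_branch_coord_sum[OF j(1)])
  also have "\<dots> = p'$1 + p'$2 + r'$1 + r'$2"
    by (simp add: p'_def r'_def algebra_simps)
  finally have "real (Suc N) + 2 \<le> p'$1 + p'$2 + r'$1 + r'$2"
    using pr(5) by simp
  moreover have "embedded_at q (Suc N) p' r'"
    unfolding p'_def r'_def using emb j(1) by (rule embedded_at_branch)
  moreover have "wedge p' r' = 1"
    using pr(1) wedge_Uorbit_Suc by (simp add: p'_def r'_def wedge_frame_map)
  moreover have "v = a' *\<^sub>R p' + b' *\<^sub>R r'"
    using vw j(4) by (simp add: p'_def r'_def frame_map_linear)
  ultimately show ?thesis using j(2,3) by blast
qed

lemma nested_frames: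
  assumes v: "0 < v$1" "0 < v$2" and not_parallel: "\<forall>n. \<forall>z\<in>sb_set q n. \<forall>c. v \<noteq> c *\<^sub>R z"
  shows "\<exists>p r a b. embedded_at q N p r \<and> wedge p r = 1 \<and> 0 < a \<and> 0 < b
     \<and> v = a *\<^sub>R p + b *\<^sub>R r \<and> real N + 2 \<le> p$1 + p$2 + r$1 + r$2"
proof (induction N)
  case 0
  have "v = v$1 *\<^sub>R e1 + v$2 *\<^sub>R e2" by (simp add: vec2_eq_iff)
  then show ?case using v embedded_at_basis
    by (intro exI[of _ e1] exI[of _ e2] exI[of _ "v$1"] exI[of _ "v$2"]) (auto simp: wedge_def)
next
  case (Suc N)
  then show ?case using nested_frame_step not_parallel by blast
qed

end

section \<open>Refinement of cones, growth, and density of slopes\<close>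

text \<open>If \<open>v = (\<alpha>, \<beta>)\<close> lies in the open cone of a deep frame, neither frame vector is a basis vector:
  e.g.\ \<open>p = e1\<close> would force \<open>r = (x, 1)\<close> with \<open>x \<ge> N \<ge> \<alpha>/\<beta>\<close>, hence \<open>\<alpha> = a + \<beta> x > \<alpha>\<close>.\<close>
lemma deep_frame_avoids_basis:
  assumes pr: "basis_or_large p" "basis_or_large r" "wedge p r = 1"
    and ab: "0 < a" "0 < b" "v = a *\<^sub>R p + b *\<^sub>R r"
    and v: "0 < v$1" "0 < v$2" "v$1 / v$2 \<le> real N" "v$2 / v$1 \<le> real N"
    and deep: "real N + 2 \<le> p$1 + p$2 + r$1 + r$2"
  shows "p \<notin> {e1, e2}" "r \<notin> {e1, e2}"
proof -
  have nonneg: "0 \<le> p$1" "0 \<le> p$2" "0 \<le> r$1" "0 \<le> r$2"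
    using pr(1,2) basis_or_large_nonneg by auto
  have v_eq: "v$1 = a * p$1 + b * r$1" "v$2 = a * p$2 + b * r$2"
    using ab(3) by simp_all
  have "v$1 \<le> real N * v$2" "v$2 \<le> real N * v$1"
    using v by (simp_all add: pos_divide_le_eq)
  moreover have "p \<noteq> e1"
  proof
    assume "p = e1"
    then have "r$2 = 1" "real N \<le> r$1" using pr(3) deep by (simp_all add: wedge_def)
    moreover have "v$1 = a + r$1 * v$2" using v_eq \<open>p = e1\<close> \<open>r$2 = 1\<close> by simp
    ultimately show False
      using mult_right_mono[of "real N" "r$1" "v$2"] \<open>v$1 \<le> real N * v$2\<close> v(2) ab(1) by linarith
  qed
  moreover have "r \<noteq> e2"
  proof
    assume "r = e2"
    then have "p$1 = 1" "real N \<le> p$2" using pr(3) deep by (simp_all add: wedge_def)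
    moreover have "v$2 = p$2 * v$1 + b" using v_eq \<open>r = e2\<close> \<open>p$1 = 1\<close> by simp
    ultimately show False
      using mult_right_mono[of "real N" "p$2" "v$1"] \<open>v$2 \<le> real N * v$1\<close> v(1) ab(2) by linarith
  qed
  moreover have "p \<noteq> e2" "r \<noteq> e1"
    using pr(3) nonneg by (auto simp: wedge_def)
  ultimately show "p \<notin> {e1, e2}" "r \<notin> {e1, e2}" by auto
qed

context hecke_index
begin

lemma grandchild_frame_map:
  assumes w: "wedge u0 u1 = 1" and z: "z \<in> sb_set q N" "z \<notin> sb_set q 0"
  shows "grandchild q u0 u1 (frame_map u0 u1 z)"
proof -
  have "\<exists>n\<ge>1. z \<in> sb_set q n \<and> z \<notin> sb_set q (n - 1)"
    using z
  proof (induction N)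
    case (Suc N)
    then show ?case by (cases "z \<in> sb_set q N") (auto intro!: exI[of _ "Suc N"])
  qed simp
  then obtain n where n: "1 \<le> n" "z \<in> sb_set q n" "z \<notin> sb_set q (n - 1)"
    by blast
  then have "frame_map u0 u1 z \<notin> frame_map u0 u1 ` sb_set q (n - 1)"
    using frame_map_inj[OF w] by blast
  then show ?thesis
    unfolding grandchild_def generated_at_def set_sb_list using n by blast
qed

theorem cone_refinement:
  assumes not_parallel: "\<forall>u\<in>Lambda q. \<forall>c::real. v \<noteq> c *\<^sub>R u"
    and u: "u0 \<in> Lambda q" "u1 \<in> Lambda q" and w: "wedge u0 u1 = 1" and v: "v \<in> open_cone u0 u1"
  shows "\<exists>w0 w1. grandchild q u0 u1 w0 \<and> grandchild q u0 u1 w1 \<and> wedge w0 w1 = 1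
           \<and> {w0, w1} \<noteq> {u0, u1} \<and> v \<in> open_cone w0 w1"
proof -
  obtain \<alpha> \<beta> where ab: "0 < \<alpha>" "0 < \<beta>" "v = \<alpha> *\<^sub>R u0 + \<beta> *\<^sub>R u1"
    using v open_cone_iff by blast
  define v' where "v' = (vector [\<alpha>, \<beta>] :: real^2)"
  have vv': "v = frame_map u0 u1 v'" using ab by (simp add: v'_def frame_map_def)
  have v'_not_parallel: "\<forall>n. \<forall>z\<in>sb_set q n. \<forall>c. v' \<noteq> c *\<^sub>R z"
    using not_parallel_sb_set[OF u w] not_parallel vv' by blast
  define N where "N = nat \<lceil>\<alpha>/\<beta> + \<beta>/\<alpha>\<rceil>"
  have N: "\<alpha>/\<beta> \<le> real N" "\<beta>/\<alpha> \<le> real N"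
    using ab unfolding N_def by (smt (verit) divide_pos_pos of_nat_ceiling)+
  have "0 < v'$1" "0 < v'$2" using ab by (simp_all add: v'_def)
  then obtain p r a b where emb: "embedded_at q N p r" and pr: "wedge p r = 1" "0 < a" "0 < b"
    "v' = a *\<^sub>R p + b *\<^sub>R r" "real N + 2 \<le> p$1 + p$2 + r$1 + r$2"
    using nested_frames[OF _ _ v'_not_parallel, of N] by blast
  have pR: "p \<in> sb_set q N" "r \<in> sb_set q N"
    using embedded_at_in_sb_set[OF emb] by auto
  have "p \<notin> {e1, e2}" "r \<notin> {e1, e2}"
    using deep_frame_avoids_basis[OF sb_set_basis_or_large[OF pR(1)] sb_set_basis_or_large[OF pR(2)]
        pr(1-4) _ _ _ _ pr(5)] ab N by (simp_all add: v'_def)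
  then have "grandchild q u0 u1 (frame_map u0 u1 p)" "grandchild q u0 u1 (frame_map u0 u1 r)"
    and "frame_map u0 u1 p \<notin> {u0, u1}"
    using grandchild_frame_map[OF w] pR frame_map_inj[OF w, of p e1] frame_map_inj[OF w, of p e2]
    by (auto simp: sb_set_0)
  moreover have "wedge (frame_map u0 u1 p) (frame_map u0 u1 r) = 1"
    using w pr(1) by (simp add: wedge_frame_map)
  moreover have "v \<in> open_cone (frame_map u0 u1 p) (frame_map u0 u1 r)"
    using vv' pr(2-4) frame_map_linear open_cone_iff by metis
  ultimately show ?thesis by blast
qed

theorem generated_norm_tendsto_infinity:
  assumes w: "wedge u0 u1 = 1" and gen: "\<forall>n\<ge>1. generated_at q u0 u1 n (w n)"
  shows "filterlim (\<lambda>n. norm (w n)) at_top sequentially"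
proof -
  define C where "C = 2 * (norm u0 + norm u1)"
  have "u0 \<noteq> 0" using w by (auto simp: wedge_def)
  then have C: "0 < C" unfolding C_def by (simp add: add_pos_nonneg)
  have "real n \<le> C * norm (w n)" if n: "1 \<le> n" for n
  proof -
    obtain z where z: "z \<in> sb_set q n" "w n = frame_map u0 u1 z" "z \<notin> sb_set q (n - 1)"
      using gen n unfolding generated_at_def set_sb_list by blast
    then have "real n \<le> z$1 + z$2"
      using sb_set_new_coord_sum[of z "n - 1"] n by simp
    also have "\<dots> = wedge (w n) u1 + wedge u0 (w n)"
      using z(2) w by (simp add: wedge_frame_map_left wedge_frame_map_right)
    also have "\<dots> \<le> C * norm (w n)"
      using abs_wedge_le[of "w n" u1] abs_wedge_le[of u0 "w n"] by (simp add: C_def algebra_simps)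
    finally show ?thesis .
  qed
  then have "\<forall>\<^sub>F n in sequentially. (1 / C) * real n \<le> norm (w n)"
    using C by (auto simp: eventually_sequentially divide_le_eq mult.commute)
  moreover have "filterlim (\<lambda>n. (1 / C) * real n) at_top sequentially"
    using C by (intro filterlim_tendsto_pos_mult_at_top[OF tendsto_const] filterlim_real_sequentially) simp
  ultimately show ?thesis by (rule filterlim_at_top_mono[rotated])
qed

end

lemma coefficient_product_small:
  fixes a b sp sr e :: real
  assumes ab: "0 < a" "0 < b" and s: "1 \<le> sp" "1 \<le> sr" "real N + 2 \<le> sp + sr"
    and e: "0 < e" "4 * (a * sp + b * sr)\<^sup>2 / e \<le> real N"
  shows "2 * (a * b) < e"
proof -
  have "sp * 1 \<le> sp * sr" "1 * sr \<le> sp * sr"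
    using s by (simp_all only: mult_left_mono mult_right_mono)
  then have "sp + sr \<le> 2 * (sp * sr)" by simp
  then have "a * b * (real N + 2) \<le> a * b * (2 * (sp * sr))"
    using ab s(3) by (intro mult_left_mono) simp_all
  also have "\<dots> = 2 * ((a * sp) * (b * sr))"
    by (simp add: algebra_simps)
  also have "(a * sp) * (b * sr) \<le> (a * sp + b * sr)\<^sup>2"
    using ab s by (simp add: power2_eq_square algebra_simps)
  also have "2 * (a * sp + b * sr)\<^sup>2 \<le> e * real N / 2"
    using e by (simp add: divide_le_eq mult.commute)
  finally have "2 * (a * b) * (real N + 2) < e * (real N + 2)"
    using e by (simp add: algebra_simps)
  then show ?thesis by (simp add: mult_less_cancel_right)
qed

lemma slope_error_bound:
  assumes "0 < c" "1/2 \<le> c * w$1" "v$1 = 1" "2 * (c * \<bar>wedge w v\<bar>) < e"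
  shows "w$1 \<noteq> 0 \<and> \<bar>w$2 / w$1 - v$2\<bar> < e"
proof -
  have "0 < c * w$1" using assms(2) by linarith
  then have w1: "0 < w$1" using assms(1) by (rule zero_less_mult_pos)
  have "w$2 / w$1 - v$2 = - wedge w v / w$1"
    using w1 assms(3) by (simp add: wedge_def field_simps)
  then have "\<bar>w$2 / w$1 - v$2\<bar> = \<bar>wedge w v\<bar> / w$1"
    using w1 by simp
  also have "\<dots> \<le> 2 * (c * \<bar>wedge w v\<bar>)"
    using w1 assms(2) mult_left_mono[of "1/2" "c * w$1" "\<bar>wedge w v\<bar>"]
    by (simp add: divide_le_eq algebra_simps)
  finally show ?thesis using w1 assms(4) by simp
qed

text \<open>As \<open>a w0$1 + b w1$1 = v$1 = 1\<close>, one summand is \<open>\<ge> 1/2\<close>; the slope of that frame vector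
  differs from the slope of \<open>v\<close> by \<open>\<bar>w \<and> v\<bar> / w$1 \<le> 2ab\<close>.\<close>
lemma frame_vector_slope_near:
  assumes "wedge w0 w1 = 1" "0 < a" "0 < b" "v = a *\<^sub>R w0 + b *\<^sub>R w1" "v$1 = 1" "2 * (a * b) < e"
  shows "\<exists>w\<in>{w0, w1}. w$1 \<noteq> 0 \<and> \<bar>w$2 / w$1 - v$2\<bar> < e"
proof -
  have "wedge w0 v = b" "wedge w1 v = - a"
    using assms(1,4) by (simp_all add: wedge_def algebra_simps)
  moreover have "a * w0$1 + b * w1$1 = 1"
    using assms(4,5) by simp
  then have "1/2 \<le> a * w0$1 \<or> 1/2 \<le> b * w1$1"
    by linarith
  ultimately show ?thesis
    using slope_error_bound[of a w0 v e] slope_error_bound[of b w1 v e] assms(2,3,5,6)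
    by (auto simp: mult.commute)
qed

context hecke_index
begin

lemma slope_approximation:
  assumes u: "u0 \<in> Lambda q" "u1 \<in> Lambda q" "wedge u0 u1 = 1"
    and v': "0 < v'$1" "0 < v'$2" and v1: "frame_map u0 u1 v' $1 = 1" and e: "0 < e"
  shows "\<exists>w\<in>Lambda q. w$1 \<noteq> 0 \<and> \<bar>w$2 / w$1 - frame_map u0 u1 v' $2\<bar> < e"
proof (cases "\<exists>u\<in>Lambda q. \<exists>c. frame_map u0 u1 v' = c *\<^sub>R u")
  case True
  then obtain u c where u: "u \<in> Lambda q" "frame_map u0 u1 v' = c *\<^sub>R u" by blast
  then have "c * u$1 = 1" using v1 by simp
  then have "u$1 \<noteq> 0" by auto
  then have "c = 1 / u$1" using \<open>c * u$1 = 1\<close> by (simp add: field_simps)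
  then have "u$2 / u$1 = frame_map u0 u1 v' $2" using u(2) by simp
  then show ?thesis using u(1) e \<open>u$1 \<noteq> 0\<close> by (intro bexI[of _ u]) simp_all
next
  case False
  then have not_parallel: "\<forall>n. \<forall>z\<in>sb_set q n. \<forall>c. v' \<noteq> c *\<^sub>R z"
    using not_parallel_sb_set[OF u] by blast
  define \<sigma> where "\<sigma> = v'$1 + v'$2"
  define N where "N = nat \<lceil>4 * \<sigma>\<^sup>2 / e\<rceil>"
  obtain p r a b where emb: "embedded_at q N p r" and pr: "wedge p r = 1" "0 < a" "0 < b"
    "v' = a *\<^sub>R p + b *\<^sub>R r" "real N + 2 \<le> p$1 + p$2 + r$1 + r$2"
    using nested_frames[OF v' not_parallel] by blast
  have "1 \<le> p$1 + p$2" "1 \<le> r$1 + r$2"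
    using embedded_at_in_sb_set[OF emb] sb_set_basis_or_large basis_or_large_nonneg by auto
  moreover have "\<sigma> = a * (p$1 + p$2) + b * (r$1 + r$2)"
    using pr(4) by (simp add: \<sigma>_def algebra_simps)
  moreover have "4 * \<sigma>\<^sup>2 / e \<le> real N"
    unfolding N_def by (rule real_nat_ceiling_ge)
  ultimately have "2 * (a * b) < e"
    using coefficient_product_small[OF pr(2,3)] pr(5) e by (simp add: add.assoc)
  moreover have "frame_map u0 u1 p \<in> Lambda q" "frame_map u0 u1 r \<in> Lambda q"
    using frame_map_sb_set_subset_Lambda[OF u] embedded_at_in_sb_set[OF emb] by auto
  moreover have "wedge (frame_map u0 u1 p) (frame_map u0 u1 r) = 1"
    using u(3) pr(1) by (simp add: wedge_frame_map)
  moreover have "frame_map u0 u1 v' = a *\<^sub>R frame_map u0 u1 p + b *\<^sub>R frame_map u0 u1 r"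
    using pr(4) frame_map_linear by simp
  ultimately show ?thesis
    using frame_vector_slope_near[OF _ pr(2,3) _ v1] by blast
qed

theorem slopes_dense: "closure {v$2 / v$1 | v. v \<in> Lambda q \<and> v$1 \<noteq> 0} = UNIV"
proof -
  let ?S = "{v$2 / v$1 | v. v \<in> Lambda q \<and> v$1 \<noteq> 0}"
  have "\<exists>y\<in>?S. dist y s < e" if e: "0 < e" for s e
  proof -
    consider "s = 0" | "0 < s" | "s < 0" by linarith
    then have "\<exists>w\<in>Lambda q. w$1 \<noteq> 0 \<and> \<bar>w$2 / w$1 - s\<bar> < e"
    proof cases
      case 1
      then show ?thesis using e1_in_Lambda e by force
    next
      case 2
      then show ?thesis using slope_approximation[OF e1_in_Lambda e2_in_Lambda, of "vector [1, s]"] e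
        by (simp add: wedge_def frame_map_basis)
    next
      case 3
      then show ?thesis
        using slope_approximation[OF minus_e2_in_Lambda e1_in_Lambda, of "vector [- s, 1]"] e
        by (simp add: wedge_def)
    qed
    then show ?thesis by (force simp: dist_real_def)
  qed
  then show ?thesis by (auto simp: closure_approachable)
qed

end

theorem mainTheorem3:
  fixes q :: nat
  assumes "q \<ge> 3"
  shows
    "(\<forall>v0\<in>Lambda q. \<forall>v1\<in>Lambda q. v0 \<noteq> v1 \<and> v0 \<noteq> - v1 \<longrightarrow> \<bar>wedge v0 v1\<bar> \<ge> 1)
   \<and> (\<forall>v u0 u1. v \<noteq> 0 \<and> (\<forall>u\<in>Lambda q. \<forall>c::real. v \<noteq> c *\<^sub>R u)
        \<and> u0 \<in> Lambda q \<and> u1 \<in> Lambda q \<and> wedge u0 u1 = 1 \<and> v \<in> open_cone u0 u1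
        \<longrightarrow> (\<exists>w0 w1. grandchild q u0 u1 w0 \<and> grandchild q u0 u1 w1 \<and> wedge w0 w1 = 1
              \<and> {w0, w1} \<noteq> {u0, u1} \<and> v \<in> open_cone w0 w1))
   \<and> (\<forall>u0 u1 (w :: nat \<Rightarrow> real^2). u0 \<in> Lambda q \<and> u1 \<in> Lambda q \<and> wedge u0 u1 = 1
        \<and> (\<forall>n\<ge>1. generated_at q u0 u1 n (w n))
        \<longrightarrow> filterlim (\<lambda>n. norm (w n)) at_top sequentially)
   \<and> closure {v$2 / v$1 | v. v \<in> Lambda q \<and> v$1 \<noteq> 0} = (UNIV :: real set)"
proof -
  interpret hecke_index q
    using assms by unfold_locales
  show ?thesis
    using Lambda_abs_wedge_ge_1 cone_refinement generated_norm_tendsto_infinity slopes_dense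
    by blast
qed

end
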